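(* Assume $h_0>0$, $|h|\le h_0$ and $U>h_0$. Fix a bond $e=\{x,y\}\in\mathscr B_\Lambda$, labelled so that $\eta_x=+1$, $\eta_y=-1$, and define on $P\mathcal H^{\rm hf}_\Lambda$ \[ X_{xy}(h):=P\,\tfrac12\Bigl(\mathrm{ad}_{\mathcal I_h((T_e)^{\rm off})}\bigl((T_e)^{\rm off}\bigr)\Bigr)^{\rm diag}P . \] Then $X_{xy}(h)$ is supported on $\{x,y\}$ and \[ \mathcal U_\Lambda X_{xy}(h)\mathcal U_\Lambda^*=-J_{xy}(h)B_{xy}+b_{xy}(h)\bigl(S^{(3)}_x-S^{(3)}_y\bigr),\qquad J_{xy}(h)=\frac{4t^2U}{U^2-h^2},\quad b_{xy}(h)=\frac{2ht^2}{U^2-h^2}. \] In particular $J_{xy}(0)=4t^2/U$ and $b_{xy}(0)=0$.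
   Context: $\Lambda=(\mathbb Z/L\mathbb Z)^d$, $L\in2\mathbb N$, $\mathscr B_\Lambda$ its unordered nearest-neighbour bonds, $\eta_x=(-1)^{x_1+\dots+x_d}$, $t\in\mathbb R$. Fermionic Fock space over $\ell^2(\Lambda)\otimes\mathbb C^2$ with CAR operators $c_{x\sigma}$, $n_{x\sigma}=c^*_{x\sigma}c_{x\sigma}$, $n_x=n_{x\uparrow}+n_{x\downarrow}$; $\mathcal H^{\rm hf}_\Lambda=\ker(\sum_xn_x-|\Lambda|)$; $D_\Lambda=\sum_xn_{x\uparrow}n_{x\downarrow}$; $M_\Lambda=\sum_x\eta_x\frac12(n_{x\uparrow}-n_{x\downarrow})$; $P$ the projection onto $\ker D_\Lambda$ in $\mathcal H^{\rm hf}_\Lambda$. $D_\Lambda$-grading: $P_m$ spectral projection of $D_\Lambda$ at $m$, $B^{(k)}=\sum_mP_{m+k}BP_m$, $B^{\rm diag}=B^{(0)}$, $B^{\rm off}=\sum_{k\ne0}B^{(k)}$. $T_e=-t\sum_\sigma(c^*_{x\sigma}c_{y\sigma}+c^*_{y\sigma}c_{x\sigma})$. For $k\ne0$, $\mathcal I_h((T_e)^{(k)})=\frac1{kU}\sum_{n\ge0}(\frac h{kU})^n\mathrm{ad}^{\,n}_{M_\Lambda}((T_e)^{(k)})$ ($\mathrm{ad}_S(A)=[S,A]$; for these bond operators the series converges whenever $|h|<U$), and $\mathcal I_h(T_e^{\rm off})=\sum_{k\ne0}\mathcal I_h((T_e)^{(k)})$. Spin identification: fix an ordering $\Lambda=\{x_1,\dots,x_N\}$;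 for $\boldsymbol\sigma\in\{\uparrow,\downarrow\}^\Lambda$ let $|\boldsymbol\sigma\rangle_f=c^*_{x_1\sigma_{x_1}}\cdots c^*_{x_N\sigma_{x_N}}|0\rangle$; $\mathcal U_\Lambda:P\mathcal H^{\rm hf}_\Lambda\to\bigotimes_{x\in\Lambda}\mathbb C^2$ is the unitary with $\mathcal U_\Lambda|\boldsymbol\sigma\rangle_f=\bigotimes_j|\sigma_{x_j}\rangle_{x_j}$. On the spin space, $S^{(a)}_x$ acts as $\frac12\sigma^{(a)}$ (Pauli) at $x$ and $B_{xy}=\frac14-\mathbf S_x\cdot\mathbf S_y$ (the singlet projector on the bond). *)

theory Defs
  imports Complex_Main "HOL-Library.List_Lexorder" "HOL-Library.Product_Lexorder"
begin

(* Sites of Lambda = (Z/LZ)^d are coordinate lists of length d with entries < L.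
   A mode is (site, spin) with True = up, False = down.
   A Fock basis state (occupation-number basis) is the finite set of occupied modes.
   Operators are matrices in this basis: 'a mat = 'a => 'a => complex. *)

type_synonym site = "nat list"
type_synonym mode = "site \<times> bool"
type_synonym fconf = "mode set"
type_synonym 'a mat = "'a \<Rightarrow> 'a \<Rightarrow> complex"

definition Lam :: "nat \<Rightarrow> nat \<Rightarrow> site set" where
  "Lam d L = {x. length x = d \<and> (\<forall>i\<in>set x. i < L)}"

definition eta :: "site \<Rightarrow> int" where
  "eta x = (-1) ^ sum_list x"

definition nn_bond :: "nat \<Rightarrow> nat \<Rightarrow> site \<Rightarrow> site \<Rightarrow> bool" where
  "nn_bond d L x y \<longleftrightarrow> x \<in> Lam d L \<and> y \<in> Lam d L \<and> x \<noteq> y \<and>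
     (\<exists>i<d. (y ! i = (x ! i + 1) mod L \<or> x ! i = (y ! i + 1) mod L) \<and>
            (\<forall>j<d. j \<noteq> i \<longrightarrow> x ! j = y ! j))"

(* basis of the fermionic Fock space over l^2(Lambda) (x) C^2 *)
definition FC :: "nat \<Rightarrow> nat \<Rightarrow> fconf set" where
  "FC d L = Pow (Lam d L \<times> UNIV)"

definition mmul :: "'a set \<Rightarrow> 'a mat \<Rightarrow> 'a mat \<Rightarrow> 'a mat" where
  "mmul C A B = (\<lambda>i j. \<Sum>k\<in>C. A i k * B k j)"

definition mid :: "'a mat" where
  "mid = (\<lambda>i j. if i = j then 1 else 0)"

definition comm :: "'a set \<Rightarrow> 'a mat \<Rightarrow> 'a mat \<Rightarrow> 'a mat" where
  "comm C A B = (\<lambda>i j. mmul C A B i j - mmul C B A i j)"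

(* CAR operators (Jordan-Wigner representation w.r.t. the lexicographic order of modes) *)
definition ann :: "mode \<Rightarrow> fconf mat" where
  "ann m = (\<lambda>S' S. if m \<in> S \<and> S' = S - {m}
                     then (-1) ^ card {m' \<in> S. m' < m} else 0)"

definition cre :: "mode \<Rightarrow> fconf mat" where
  "cre m = (\<lambda>S' S. cnj (ann m S S'))"

definition numop :: "nat \<Rightarrow> nat \<Rightarrow> mode \<Rightarrow> fconf mat" where
  "numop d L m = mmul (FC d L) (cre m) (ann m)"

definition Dop :: "nat \<Rightarrow> nat \<Rightarrow> fconf mat" where
  "Dop d L = (\<lambda>S' S. \<Sum>x\<in>Lam d L.
      mmul (FC d L) (numop d L (x, True)) (numop d L (x, False)) S' S)"

definition Mop :: "nat \<Rightarrow> nat \<Rightarrow> fconf mat" where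
  "Mop d L = (\<lambda>S' S. \<Sum>x\<in>Lam d L.
      of_int (eta x) * (1/2) * (numop d L (x, True) S' S - numop d L (x, False) S' S))"

definition Top :: "nat \<Rightarrow> nat \<Rightarrow> real \<Rightarrow> site \<Rightarrow> site \<Rightarrow> fconf mat" where
  "Top d L t x y = (\<lambda>S' S. - of_real t * (\<Sum>\<sigma>\<in>(UNIV::bool set).
      mmul (FC d L) (cre (x, \<sigma>)) (ann (y, \<sigma>)) S' S + mmul (FC d L) (cre (y, \<sigma>)) (ann (x, \<sigma>)) S' S))"

(* spectral projection of D_Lambda at m (D_Lambda is diagonal in the occupation basis) *)
definition Pm :: "nat \<Rightarrow> nat \<Rightarrow> int \<Rightarrow> fconf mat" where
  "Pm d L m = (\<lambda>S' S. if S' = S \<and> Dop d L S S = of_int m then 1 else 0)"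

(* B^(k) = sum_m P_{m+k} B P_m ; the spectrum of D_Lambda lies in {0..|Lambda|} *)
definition grade :: "nat \<Rightarrow> nat \<Rightarrow> int \<Rightarrow> fconf mat \<Rightarrow> fconf mat" where
  "grade d L k B = (\<lambda>S' S. \<Sum>m\<in>{0..int (card (Lam d L))}.
      mmul (FC d L) (mmul (FC d L) (Pm d L (m + k)) B) (Pm d L m) S' S)"

definition kset :: "nat \<Rightarrow> nat \<Rightarrow> int set" where
  "kset d L = {- int (card (Lam d L)) .. int (card (Lam d L))} - {0}"

definition offd :: "nat \<Rightarrow> nat \<Rightarrow> fconf mat \<Rightarrow> fconf mat" where
  "offd d L B = (\<lambda>S' S. \<Sum>k\<in>kset d L. grade d L k B S' S)"

(* I_h(B^(k)) = 1/(kU) sum_n (h/(kU))^n ad_M^n (B^(k)) ; series taken entrywise *)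
definition Ik :: "nat \<Rightarrow> nat \<Rightarrow> real \<Rightarrow> real \<Rightarrow> int \<Rightarrow> fconf mat \<Rightarrow> fconf mat" where
  "Ik d L U h k B = (\<lambda>S' S. 1 / (of_int k * of_real U) *
      (\<Sum>n. (of_real h / (of_int k * of_real U)) ^ n *
            (((comm (FC d L) (Mop d L)) ^^ n) (grade d L k B)) S' S))"

definition Ioff :: "nat \<Rightarrow> nat \<Rightarrow> real \<Rightarrow> real \<Rightarrow> fconf mat \<Rightarrow> fconf mat" where
  "Ioff d L U h B = (\<lambda>S' S. \<Sum>k\<in>kset d L. Ik d L U h k B S' S)"

(* P: projection onto ker D_Lambda inside the half-filled space *)
definition Pproj :: "nat \<Rightarrow> nat \<Rightarrow> fconf mat" where
  "Pproj d L = (\<lambda>S' S. if S' = S \<and> card S = card (Lam d L) \<and> Dop d L S S = 0 then 1 else 0)"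

definition Xop :: "nat \<Rightarrow> nat \<Rightarrow> real \<Rightarrow> real \<Rightarrow> real \<Rightarrow> site \<Rightarrow> site \<Rightarrow> fconf mat" where
  "Xop d L t U h x y =
     (let C = FC d L; T = offd d L (Top d L t x y); I = Ioff d L U h (Top d L t x y)
      in mmul C (mmul C (Pproj d L) (grade d L 0 (\<lambda>S' S. (1/2) * comm C I T S' S))) (Pproj d L))"

(* spin side: basis of (x)_{x in Lambda} C^2 = spin configurations on Lambda *)
definition SC :: "nat \<Rightarrow> nat \<Rightarrow> (site \<Rightarrow> bool) set" where
  "SC d L = {\<sigma>. \<forall>z. z \<notin> Lam d L \<longrightarrow> \<not> \<sigma> z}"

definition siteop :: "site \<Rightarrow> bool mat \<Rightarrow> (site \<Rightarrow> bool) mat" where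
  "siteop x A = (\<lambda>\<sigma>' \<sigma>. if (\<forall>z. z \<noteq> x \<longrightarrow> \<sigma>' z = \<sigma> z) then A (\<sigma>' x) (\<sigma> x) else 0)"

(* Pauli matrices, rows/columns indexed by True = up, False = down *)
definition pauli :: "nat \<Rightarrow> bool mat" where
  "pauli a = (\<lambda>i j.
     if a = 1 then (if i \<noteq> j then 1 else 0)
     else if a = 2 then (if i = j then 0 else if i then - \<i> else \<i>)
     else (if i \<noteq> j then 0 else if i then 1 else -1))"

definition Sop :: "site \<Rightarrow> nat \<Rightarrow> (site \<Rightarrow> bool) mat" where
  "Sop x a = siteop x (\<lambda>i j. (1/2) * pauli a i j)"

definition Bspin :: "nat \<Rightarrow> nat \<Rightarrow> site \<Rightarrow> site \<Rightarrow> (site \<Rightarrow> bool) mat" where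
  "Bspin d L x y = (\<lambda>\<sigma>' \<sigma>. (1/4) * mid \<sigma>' \<sigma> -
      (\<Sum>a\<in>{1,2,3::nat}. mmul (SC d L) (Sop x a) (Sop y a) \<sigma>' \<sigma>))"

(* |sigma>_f = c*_{x1 sigma_x1} ... c*_{xN sigma_xN} |0> for the ordering xs *)
primrec fvec :: "nat \<Rightarrow> nat \<Rightarrow> site list \<Rightarrow> (site \<Rightarrow> bool) \<Rightarrow> fconf \<Rightarrow> complex" where
  "fvec d L [] \<sigma> = (\<lambda>S. if S = {} then 1 else 0)"
| "fvec d L (z # zs) \<sigma> = (\<lambda>S'. \<Sum>S\<in>FC d L. cre (z, \<sigma> z) S' S * fvec d L zs \<sigma> S)"

(* matrix of U X U^* in the spin basis: <sigma'|_f X |sigma>_f *)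
definition Uconj :: "nat \<Rightarrow> nat \<Rightarrow> site list \<Rightarrow> fconf mat \<Rightarrow> (site \<Rightarrow> bool) mat" where
  "Uconj d L xs X = (\<lambda>\<sigma>' \<sigma>. \<Sum>S'\<in>FC d L. \<Sum>S\<in>FC d L.
      cnj (fvec d L xs \<sigma>' S') * X S' S * fvec d L xs \<sigma> S)"

definition spin_supported :: "nat \<Rightarrow> nat \<Rightarrow> site set \<Rightarrow> (site \<Rightarrow> bool) mat \<Rightarrow> bool" where
  "spin_supported d L Z A \<longleftrightarrow> (\<exists>K :: (site \<Rightarrow> bool) mat. \<forall>\<sigma>'\<in>SC d L. \<forall>\<sigma>\<in>SC d L.
      A \<sigma>' \<sigma> = (if \<forall>z\<in>Lam d L - Z. \<sigma>' z = \<sigma> z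
                 then K (\<lambda>z. z \<in> Z \<and> \<sigma>' z) (\<lambda>z. z \<in> Z \<and> \<sigma> z) else 0))"

definition Jxy :: "real \<Rightarrow> real \<Rightarrow> real \<Rightarrow> real" where
  "Jxy t U h = 4 * t^2 * U / (U^2 - h^2)"

definition bxy :: "real \<Rightarrow> real \<Rightarrow> real \<Rightarrow> real" where
  "bxy t U h = 2 * h * t^2 / (U^2 - h^2)"

end

theory Submission
  imports Defs
begin

text \<open>From a configuration with every site singly occupied, a hop across the bond creates exactly
  one doubly occupied site and changes the staggered magnetisation \<open>M\<^sub>\<Lambda>\<close> by \<open>\<plusminus>1\<close>. Hence on
  the matrix elements of \<open>T\<^sub>e\<^sup>off\<close> leaving or entering such a configuration the series defining
  \<open>\<I>\<^sub>h\<close> is geometric, with sum \<open>T\<^sub>e/(kU - h \<Delta>M)\<close>, and between singly occupied states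
  \<open>X\<^sub>x\<^sub>y(h)\<close> becomes a sum over pairs of hops of \<open>t\<^sup>2 (1/(-U - h q\<^sub>1) - 1/(U - h q\<^sub>2)) c\<^sup>*c c\<^sup>*c\<close>.
  Pulling the two creators at the bond to the front of the Jordan--Wigner vector \<open>|\<sigma>\<rangle>\<^sub>f\<close> and
  moving the hops through them with the anticommutation relations leaves an explicit matrix in the
  two spins at \<open>x\<close> and \<open>y\<close>: it couples only antiparallel pairs, with diagonal entries
  \<open>-2t\<^sup>2/(U \<plusminus> h)\<close> and exchange amplitude \<open>t\<^sup>2 (1/(U+h) + 1/(U-h))\<close>, which is exactly the matrix
  of \<open>-J B + b (S\<^sup>3\<^sub>x - S\<^sup>3\<^sub>y)\<close>.\<close>

section \<open>Fermionic Fock space\<close>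

lemma finite_Lam: "finite (Lam d L)"
  unfolding Lam_def
  by (rule finite_subset[OF _ finite_lists_length_eq[of "{..<L}" d]]) auto

definition modes :: "nat \<Rightarrow> nat \<Rightarrow> mode set" where
  "modes d L = Lam d L \<times> UNIV"

lemma finite_modes: "finite (modes d L)"
  unfolding modes_def using finite_Lam by simp

lemma finite_FC: "finite (FC d L)"
  unfolding FC_def using finite_modes[unfolded modes_def] by simp

lemma finite_FC_element: "S \<in> FC d L \<Longrightarrow> finite S"
  unfolding FC_def using finite_modes[unfolded modes_def] by (auto intro: finite_subset)

lemma FC_remove: "S \<in> FC d L \<Longrightarrow> S - {m} \<in> FC d L"
  unfolding FC_def by auto

definition mat_vec :: "'a set \<Rightarrow> 'a mat \<Rightarrow> ('a \<Rightarrow> complex) \<Rightarrow> 'a \<Rightarrow> complex" where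
  "mat_vec C A v = (\<lambda>S'. \<Sum>S\<in>C. A S' S * v S)"

definition supported :: "'a set \<Rightarrow> ('a \<Rightarrow> complex) \<Rightarrow> bool" where
  "supported C v \<longleftrightarrow> (\<forall>S. v S \<noteq> 0 \<longrightarrow> S \<in> C)"

lemma mat_vec_add: "mat_vec C A (\<lambda>S. f S + g S) = (\<lambda>S. mat_vec C A f S + mat_vec C A g S)"
  unfolding mat_vec_def by (simp add: distrib_left sum.distrib)

lemma mat_vec_diff: "mat_vec C A (\<lambda>S. f S - g S) = (\<lambda>S. mat_vec C A f S - mat_vec C A g S)"
  unfolding mat_vec_def by (simp add: right_diff_distrib sum_subtractf)

lemma mat_vec_scale: "mat_vec C A (\<lambda>S. c * f S) = (\<lambda>S. c * mat_vec C A f S)"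
  unfolding mat_vec_def by (simp add: sum_distrib_left algebra_simps)

lemma mat_vec_zero: "mat_vec C A (\<lambda>S. 0) = (\<lambda>S. 0)"
  unfolding mat_vec_def by simp

lemma mat_vec_if: "mat_vec C A (\<lambda>S. if P then f S else 0) = (\<lambda>S. if P then mat_vec C A f S else 0)"
  by (cases P) (simp_all add: mat_vec_zero)

lemma mat_vec_mmul: "mat_vec C (mmul C A B) v = mat_vec C A (mat_vec C B v)"
proof
  fix S'
  have "mat_vec C (mmul C A B) v S' = (\<Sum>S\<in>C. \<Sum>K\<in>C. A S' K * (B K S * v S))"
    unfolding mat_vec_def mmul_def by (simp add: sum_distrib_right mult.assoc)
  also have "\<dots> = (\<Sum>K\<in>C. \<Sum>S\<in>C. A S' K * (B K S * v S))" by (rule sum.swap)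
  also have "\<dots> = mat_vec C A (mat_vec C B v) S'"
    unfolding mat_vec_def by (simp add: sum_distrib_left)
  finally show "mat_vec C (mmul C A B) v S' = mat_vec C A (mat_vec C B v) S'" .
qed

definition jw_sign :: "fconf \<Rightarrow> mode \<Rightarrow> complex" where
  "jw_sign S m = (-1) ^ card {m'\<in>S. m' < m}"

lemma jw_sign_cases: "jw_sign S m = 1 \<or> jw_sign S m = -1"
  unfolding jw_sign_def
  by (cases "even (card {m'\<in>S. m' < m})") (simp_all add: neg_one_even_power neg_one_odd_power)

lemma jw_sign_square: "jw_sign S m * jw_sign S m = 1"
  using jw_sign_cases[of S m] by auto

lemma jw_sign_insert:
  assumes "finite S" and "a \<notin> S"
  shows "jw_sign (insert a S) m = (if a < m then - jw_sign S m else jw_sign S m)"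
proof (cases "a < m")
  case True
  then have "{m'\<in>insert a S. m' < m} = insert a {m'\<in>S. m' < m}" by auto
  then show ?thesis using True assms unfolding jw_sign_def by simp
next
  case False
  then have "{m'\<in>insert a S. m' < m} = {m'\<in>S. m' < m}" by auto
  then show ?thesis using False unfolding jw_sign_def by simp
qed

lemma jw_sign_remove:
  assumes "finite S" and "a \<in> S"
  shows "jw_sign (S - {a}) m = (if a < m then - jw_sign S m else jw_sign S m)"
  using jw_sign_insert[of "S - {a}" a m] assms by (auto simp: insert_absorb)

lemma jw_sign_insert_self: "jw_sign (insert m S) m = jw_sign S m"
  unfolding jw_sign_def by (metis (lifting) insert_iff less_irrefl mem_Collect_eq)

lemma jw_sign_remove_self: "jw_sign (S - {m}) m = jw_sign S m"
  unfolding jw_sign_def by (metis (lifting) DiffD1 DiffI less_irrefl mem_Collect_eq singletonD)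

lemma cre_entry: "cre m S' S = (if m \<in> S' \<and> S = S' - {m} then jw_sign S' m else 0)"
  unfolding cre_def ann_def jw_sign_def by auto

lemma ann_entry: "ann m S' S = (if m \<notin> S' \<and> S = insert m S' then jw_sign S' m else 0)"
  unfolding ann_def using jw_sign_insert_self[of m S'] by (auto simp: jw_sign_def)

lemma supported_infinite: "supported (FC d L) v \<Longrightarrow> infinite S \<Longrightarrow> v S = 0"
  unfolding supported_def using finite_FC_element by blast

lemma mat_vec_cre:
  assumes "supported (FC d L) v"
  shows "mat_vec (FC d L) (cre m) v S' = (if m \<in> S' then jw_sign S' m * v (S' - {m}) else 0)"
proof -
  have "mat_vec (FC d L) (cre m) v S'
      = (\<Sum>S\<in>FC d L. if S = S' - {m} then (if m \<in> S' then jw_sign S' m * v S else 0) else 0)"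
    unfolding mat_vec_def cre_entry by (intro sum.cong) auto
  then show ?thesis using assms unfolding supported_def by (auto simp: finite_FC)
qed

lemma mat_vec_ann:
  assumes "supported (FC d L) v"
  shows "mat_vec (FC d L) (ann m) v S' = (if m \<notin> S' then jw_sign S' m * v (insert m S') else 0)"
proof -
  have "mat_vec (FC d L) (ann m) v S'
      = (\<Sum>S\<in>FC d L. if S = insert m S' then (if m \<notin> S' then jw_sign S' m * v S else 0) else 0)"
    unfolding mat_vec_def ann_entry by (intro sum.cong) auto
  then show ?thesis using assms unfolding supported_def by (auto simp: finite_FC)
qed

lemma supported_cre:
  "supported (FC d L) v \<Longrightarrow> m \<in> modes d L \<Longrightarrow> supported (FC d L) (mat_vec (FC d L) (cre m) v)"
  unfolding supported_def
  by (subst mat_vec_cre[unfolded supported_def]) (auto simp: FC_def modes_def split: if_splits)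

lemma supported_ann: "supported (FC d L) v \<Longrightarrow> supported (FC d L) (mat_vec (FC d L) (ann m) v)"
  unfolding supported_def
  by (subst mat_vec_ann[unfolded supported_def]) (auto simp: FC_def split: if_splits)

lemma cre_cre_anticomm:
  assumes v: "supported (FC d L) v" and a: "a \<in> modes d L" and b: "b \<in> modes d L"
  shows "mat_vec (FC d L) (cre a) (mat_vec (FC d L) (cre b) v) S
       = - mat_vec (FC d L) (cre b) (mat_vec (FC d L) (cre a) v) S"
proof -
  have "S - {b} - {a} = S - {a} - {b}" by auto
  then have ab: "mat_vec (FC d L) (cre a) (mat_vec (FC d L) (cre b) v) S =
      (if a \<in> S \<and> b \<in> S - {a} then jw_sign S a * jw_sign (S - {a}) b * v (S - {a} - {b}) else 0)"
    and ba: "mat_vec (FC d L) (cre b) (mat_vec (FC d L) (cre a) v) S =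
      (if b \<in> S \<and> a \<in> S - {b} then jw_sign S b * jw_sign (S - {b}) a * v (S - {a} - {b}) else 0)"
    unfolding mat_vec_cre[OF supported_cre[OF v b]] mat_vec_cre[OF supported_cre[OF v a]]
      mat_vec_cre[OF v] by simp_all
  show ?thesis
  proof (cases "finite S \<and> a \<in> S \<and> b \<in> S \<and> a \<noteq> b")
    case False
    then show ?thesis unfolding ab ba using supported_infinite[OF v, of "S - {a} - {b}"] by auto
  next
    case True
    then show ?thesis unfolding ab ba by (auto simp: jw_sign_remove not_less_iff_gr_or_eq)
  qed
qed

lemma ann_cre_anticomm:
  assumes v: "supported (FC d L) v" and m: "m \<in> modes d L"
  shows "mat_vec (FC d L) (ann b) (mat_vec (FC d L) (cre m) v) S
       = (if b = m then v S else 0) - mat_vec (FC d L) (cre m) (mat_vec (FC d L) (ann b) v) S"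
proof -
  have bm: "mat_vec (FC d L) (ann b) (mat_vec (FC d L) (cre m) v) S =
      (if b \<notin> S \<and> m \<in> insert b S
       then jw_sign S b * jw_sign (insert b S) m * v (insert b S - {m}) else 0)"
    and mb: "mat_vec (FC d L) (cre m) (mat_vec (FC d L) (ann b) v) S =
      (if m \<in> S \<and> b \<notin> S - {m}
       then jw_sign S m * jw_sign (S - {m}) b * v (insert b (S - {m})) else 0)"
    unfolding mat_vec_ann[OF supported_cre[OF v m]] mat_vec_cre[OF supported_ann[OF v]]
      mat_vec_cre[OF v] mat_vec_ann[OF v] by simp_all
  show ?thesis
  proof (cases "finite S")
    case False
    then have "v S = 0" "v (insert b S - {m}) = 0" "v (insert b (S - {m})) = 0"
      using supported_infinite[OF v] by auto
    then show ?thesis unfolding bm mb by (auto simp: insert_absorb)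
  next
    case fin: True
    show ?thesis
    proof (cases "b = m")
      case True
      then show ?thesis unfolding bm mb
        using jw_sign_square[of S m]
        by (auto simp: jw_sign_insert_self jw_sign_remove_self insert_absorb)
    next
      case False
      then have "insert b S - {m} = insert b (S - {m})" by auto
      moreover have "b \<notin> S \<Longrightarrow> m \<in> S \<Longrightarrow> jw_sign S b * jw_sign (insert b S) m
          = - (jw_sign S m * jw_sign (S - {m}) b)"
        using False fin by (auto simp: jw_sign_insert jw_sign_remove not_less_iff_gr_or_eq)
      ultimately show ?thesis unfolding bm mb using False by auto
    qed
  qed
qed

abbreviation hop :: "nat \<Rightarrow> nat \<Rightarrow> mode \<Rightarrow> mode \<Rightarrow> fconf mat" where
  "hop d L a b \<equiv> mmul (FC d L) (cre a) (ann b)"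

lemma hop_cre_commutator:
  assumes v: "supported (FC d L) v" and a: "a \<in> modes d L" and m: "m \<in> modes d L"
  shows "mat_vec (FC d L) (hop d L a b) (mat_vec (FC d L) (cre m) v) =
    (\<lambda>S. (if b = m then mat_vec (FC d L) (cre a) v S else 0)
         + mat_vec (FC d L) (cre m) (mat_vec (FC d L) (hop d L a b) v) S)"
proof
  fix S
  let ?c = "\<lambda>m. mat_vec (FC d L) (cre m)" and ?b = "mat_vec (FC d L) (ann b)"
  have anticomm: "?b (?c m v) = (\<lambda>S. (if b = m then v S else 0) - ?c m (?b v) S)"
    by (intro ext) (rule ann_cre_anticomm[OF v m])
  have "?c a (?b (?c m v)) S = (if b = m then ?c a v S else 0) - ?c a (?c m (?b v)) S"
    unfolding anticomm mat_vec_diff mat_vec_if by simp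
  also have "?c a (?c m (?b v)) S = - ?c m (?c a (?b v)) S"
    by (rule cre_cre_anticomm[OF supported_ann[OF v] a m])
  finally show "mat_vec (FC d L) (hop d L a b) (?c m v) S =
      (if b = m then ?c a v S else 0) + ?c m (mat_vec (FC d L) (hop d L a b) v) S"
    by (simp add: mat_vec_mmul)
qed

lemma fvec_Cons: "fvec d L (z # zs) \<sigma> = mat_vec (FC d L) (cre (z, \<sigma> z)) (fvec d L zs \<sigma>)"
  unfolding mat_vec_def by simp

declare fvec.simps(2)[simp del]

lemma supported_fvec: "set zs \<subseteq> Lam d L \<Longrightarrow> supported (FC d L) (fvec d L zs \<sigma>)"
proof (induction zs)
  case Nil
  then show ?case unfolding supported_def FC_def by auto
next
  case (Cons z zs)
  then show ?case unfolding fvec_Cons by (intro supported_cre) (auto simp: modes_def)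
qed

lemma hop_fvec_eq_0:
  assumes "set zs \<subseteq> Lam d L" and "a \<in> modes d L" and "b \<in> modes d L"
    and "\<forall>z\<in>set zs. (z, \<sigma> z) \<noteq> b"
  shows "mat_vec (FC d L) (hop d L a b) (fvec d L zs \<sigma>) = (\<lambda>S. 0)"
  using assms
proof (induction zs)
  case Nil
  have "supported (FC d L) (\<lambda>S. if S = {} then 1 else 0)" unfolding supported_def FC_def by auto
  then show ?case
    by (intro ext) (simp add: mat_vec_mmul mat_vec_cre[OF supported_ann] mat_vec_ann)
next
  case (Cons z zs)
  then show ?case unfolding fvec_Cons
    by (subst hop_cre_commutator) (auto simp: supported_fvec modes_def mat_vec_zero)
qed

lemma fvec_eq_signed_indicator:
  assumes "distinct zs" and "set zs \<subseteq> Lam d L"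
  shows "\<exists>c. (c = 1 \<or> c = -1) \<and>
           fvec d L zs \<sigma> = (\<lambda>S. if S = (\<lambda>z. (z, \<sigma> z)) ` set zs then c else 0)"
  using assms
proof (induction zs)
  case Nil
  then show ?case by auto
next
  case (Cons z zs)
  let ?W = "(\<lambda>z. (z, \<sigma> z)) ` set zs"
  obtain c where c: "c = 1 \<or> c = -1" and f: "fvec d L zs \<sigma> = (\<lambda>S. if S = ?W then c else 0)"
    using Cons by auto
  have "(z, \<sigma> z) \<notin> ?W" using Cons.prems by auto
  then have "fvec d L (z # zs) \<sigma>
      = (\<lambda>S. if S = insert (z, \<sigma> z) ?W then jw_sign (insert (z, \<sigma> z) ?W) (z, \<sigma> z) * c else 0)"
    using Cons.prems supported_fvec[of zs d L \<sigma>]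
    by (intro ext) (auto simp: fvec_Cons mat_vec_cre f)
  moreover have "jw_sign (insert (z, \<sigma> z) ?W) (z, \<sigma> z) * c \<in> {1, -1}"
    using c jw_sign_cases[of "insert (z, \<sigma> z) ?W" "(z, \<sigma> z)"] by auto
  ultimately show ?case by auto
qed

lemma fvec_cong: "(\<And>z. z \<in> set zs \<Longrightarrow> \<sigma> z = \<tau> z) \<Longrightarrow> fvec d L zs \<sigma> = fvec d L zs \<tau>"
  by (induction zs) (auto simp: fvec_Cons)

lemma fvec_move_to_front:
  assumes "distinct zs" and "set zs \<subseteq> Lam d L" and "z \<in> set zs"
  shows "fvec d L zs \<sigma> = (\<lambda>S. (-1) ^ length (takeWhile (\<lambda>w. w \<noteq> z) zs) *
      mat_vec (FC d L) (cre (z, \<sigma> z)) (fvec d L (removeAll z zs) \<sigma>) S)"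
  using assms
proof (induction zs)
  case Nil
  then show ?case by simp
next
  case (Cons w zs)
  show ?case
  proof (cases "w = z")
    case True
    then have "removeAll z zs = zs" using Cons.prems by (simp add: distinct_removeAll)
    then show ?thesis using True by (simp add: fvec_Cons)
  next
    case False
    have IH: "fvec d L zs \<sigma> = (\<lambda>S. (-1) ^ length (takeWhile (\<lambda>w. w \<noteq> z) zs) *
        mat_vec (FC d L) (cre (z, \<sigma> z)) (fvec d L (removeAll z zs) \<sigma>) S)"
      using Cons False by auto
    have v: "supported (FC d L) (fvec d L (removeAll z zs) \<sigma>)"
      using Cons.prems by (intro supported_fvec) auto
    have "(z, \<sigma> z) \<in> modes d L" "(w, \<sigma> w) \<in> modes d L"
      using Cons.prems by (auto simp: modes_def)
    note swap = cre_cre_anticomm[OF v this]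
    show ?thesis
      unfolding fvec_Cons IH mat_vec_scale using False by (auto simp: fvec_Cons swap)
  qed
qed

section \<open>The diagonal operators \<open>D\<^sub>\<Lambda>\<close> and \<open>M\<^sub>\<Lambda>\<close>\<close>

definition double_occ :: "nat \<Rightarrow> nat \<Rightarrow> fconf \<Rightarrow> nat" where
  "double_occ d L S = card {z \<in> Lam d L. (z, True) \<in> S \<and> (z, False) \<in> S}"

definition stag_magn :: "nat \<Rightarrow> nat \<Rightarrow> fconf \<Rightarrow> complex" where
  "stag_magn d L S = (\<Sum>z\<in>Lam d L. of_int (eta z) * (1/2) *
      ((if (z, True) \<in> S then 1 else 0) - (if (z, False) \<in> S then 1 else 0)))"

definition mode_magn :: "mode \<Rightarrow> complex" where
  "mode_magn m = of_int (eta (fst m)) * (1/2) * (if snd m then 1 else -1)"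

lemma double_occ_le: "double_occ d L S \<le> card (Lam d L)"
  unfolding double_occ_def by (rule card_mono[OF finite_Lam]) auto

lemma numop_entry:
  assumes "S \<in> FC d L"
  shows "numop d L m S' S = (if S' = S \<and> m \<in> S then 1 else 0)"
proof -
  have "numop d L m S' S
      = (\<Sum>K\<in>FC d L. if K = S - {m} then (if S' = S \<and> m \<in> S then 1 else 0) else 0)"
    unfolding numop_def mmul_def cre_entry ann_entry
    using jw_sign_square[of S m] by (intro sum.cong) (auto simp: jw_sign_remove_self insert_absorb)
  then show ?thesis using FC_remove[OF assms] by (simp add: finite_FC)
qed

lemma Dop_entry:
  assumes S: "S \<in> FC d L"
  shows "Dop d L S' S = (if S' = S then of_nat (double_occ d L S) else 0)"
proof -
  have "mmul (FC d L) (numop d L (z, True)) (numop d L (z, False)) S' S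
      = of_bool (S' = S \<and> (z, True) \<in> S \<and> (z, False) \<in> S)" for z
  proof -
    have "mmul (FC d L) (numop d L (z, True)) (numop d L (z, False)) S' S
        = (\<Sum>K\<in>FC d L. if K = S then of_bool (S' = S \<and> (z, True) \<in> S \<and> (z, False) \<in> S) else 0)"
      unfolding mmul_def by (intro sum.cong) (auto simp: numop_entry[OF S] numop_entry)
    then show ?thesis using S by (simp add: finite_FC)
  qed
  then show ?thesis
    unfolding Dop_def double_occ_def by (cases "S' = S") (simp_all add: finite_Lam Int_def)
qed

lemma Mop_entry: "S \<in> FC d L \<Longrightarrow> Mop d L S' S = (if S' = S then stag_magn d L S else 0)"
  unfolding Mop_def stag_magn_def by (auto simp: numop_entry)

lemma stag_magn_eq_sum: "S \<subseteq> modes d L \<Longrightarrow> stag_magn d L S = (\<Sum>m\<in>S. mode_magn m)"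
proof -
  assume S: "S \<subseteq> modes d L"
  have "stag_magn d L S = (\<Sum>z\<in>Lam d L. \<Sum>s\<in>UNIV. if (z, s) \<in> S then mode_magn (z, s) else 0)"
    unfolding stag_magn_def mode_magn_def
    by (intro sum.cong refl) (simp add: UNIV_bool algebra_simps)
  also have "\<dots> = (\<Sum>m\<in>modes d L. if m \<in> S then mode_magn m else 0)"
    unfolding modes_def sum.cartesian_product' ..
  also have "\<dots> = (\<Sum>m\<in>modes d L \<inter> S. mode_magn m)"
    by (simp add: sum.inter_restrict finite_modes)
  also have "modes d L \<inter> S = S" using S by auto
  finally show ?thesis .
qed

lemma hop_nonzero_imp:
  assumes "hop d L a b S' S \<noteq> 0"
  shows "b \<in> S \<and> a \<notin> S - {b} \<and> S' = insert a (S - {b})"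
proof -
  obtain K where "cre a S' K * ann b K S \<noteq> 0"
    using assms unfolding mmul_def by (meson sum.neutral)
  then show ?thesis unfolding cre_entry ann_entry by (auto split: if_splits)
qed

lemma stag_magn_hop:
  assumes S: "S \<in> FC d L" and a: "a \<in> modes d L" and nz: "hop d L a b S' S \<noteq> 0"
  shows "stag_magn d L S' - stag_magn d L S = mode_magn a - mode_magn b"
proof -
  note shape = hop_nonzero_imp[OF nz]
  have SM: "S \<subseteq> modes d L" and fin: "finite S"
    using S finite_FC_element[OF S] unfolding FC_def modes_def by auto
  then have "insert a (S - {b}) \<subseteq> modes d L" using a by auto
  then have "stag_magn d L S' = (\<Sum>m\<in>insert a (S - {b}). mode_magn m)"
    using shape by (simp add: stag_magn_eq_sum)
  also have "\<dots> = mode_magn a + (\<Sum>m\<in>S - {b}. mode_magn m)"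
    using shape fin by simp
  also have "\<dots> = mode_magn a + (\<Sum>m\<in>S. mode_magn m) - mode_magn b"
    using shape fin by (simp add: sum_diff1)
  finally show ?thesis using stag_magn_eq_sum[OF SM] by simp
qed

section \<open>Grading by double occupancy and the operator \<open>\<I>\<^sub>h\<close>\<close>

lemma Pm_entry:
  assumes "S \<in> FC d L"
  shows "Pm d L m S' S = (if S' = S \<and> int (double_occ d L S) = m then 1 else 0)"
proof -
  have "(of_nat (double_occ d L S) :: complex) = of_int m \<longleftrightarrow> int (double_occ d L S) = m"
    by (metis of_int_eq_iff of_int_of_nat_eq)
  then show ?thesis unfolding Pm_def using Dop_entry[OF assms] by auto
qed

lemma grade_entry:
  assumes S: "S \<in> FC d L" and S': "S' \<in> FC d L"
  shows "grade d L k B S' S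
       = (if int (double_occ d L S') = int (double_occ d L S) + k then B S' S else 0)"
proof -
  have "mmul (FC d L) (mmul (FC d L) (Pm d L (m + k)) B) (Pm d L m) S' S =
     (if int (double_occ d L S) = m then (if int (double_occ d L S') = m + k then B S' S else 0)
      else 0)" for m
  proof -
    have "mmul (FC d L) (Pm d L (m + k)) B S' S
        = (\<Sum>K\<in>FC d L. if K = S' then (if int (double_occ d L S') = m + k then B S' S else 0) else 0)"
      unfolding mmul_def by (intro sum.cong refl) (auto simp: Pm_entry)
    moreover have "mmul (FC d L) (mmul (FC d L) (Pm d L (m + k)) B) (Pm d L m) S' S
        = (\<Sum>K\<in>FC d L. if K = S then mmul (FC d L) (Pm d L (m + k)) B S' S
                                     * (if int (double_occ d L S) = m then 1 else 0) else 0)"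
      unfolding mmul_def[of _ _ "Pm d L m"] by (intro sum.cong refl) (auto simp: Pm_entry[OF S])
    ultimately show ?thesis using S S' by (simp add: finite_FC)
  qed
  then show ?thesis
    unfolding grade_def using double_occ_le[of d L S] by simp
qed

lemma offd_entry:
  assumes S: "S \<in> FC d L" and S': "S' \<in> FC d L"
  shows "offd d L B S' S = (if double_occ d L S' \<noteq> double_occ d L S then B S' S else 0)"
proof -
  have "offd d L B S' S = (\<Sum>k\<in>kset d L.
      if int (double_occ d L S') - int (double_occ d L S) = k then B S' S else 0)"
    unfolding offd_def grade_entry[OF S S'] by (intro sum.cong refl) auto
  then show ?thesis
    using double_occ_le[of d L S] double_occ_le[of d L S'] by (auto simp: kset_def)
qed

lemma ad_Mop_power_entry:
  assumes "S \<in> FC d L" and "S' \<in> FC d L"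
  shows "(comm (FC d L) (Mop d L) ^^ n) A S' S = (stag_magn d L S' - stag_magn d L S) ^ n * A S' S"
  using assms
proof (induction n arbitrary: S S')
  case 0
  then show ?case by simp
next
  case (Suc n)
  let ?B = "(comm (FC d L) (Mop d L) ^^ n) A"
  have "mmul (FC d L) (Mop d L) ?B S' S
      = (\<Sum>K\<in>FC d L. if K = S' then stag_magn d L S' * ?B S' S else 0)"
    unfolding mmul_def by (intro sum.cong refl) (auto simp: Mop_entry)
  moreover have "mmul (FC d L) ?B (Mop d L) S' S
      = (\<Sum>K\<in>FC d L. if K = S then ?B S' S * stag_magn d L S else 0)"
    unfolding mmul_def by (intro sum.cong refl) (auto simp: Mop_entry[OF Suc.prems(1)])
  ultimately have "comm (FC d L) (Mop d L) ?B S' S = (stag_magn d L S' - stag_magn d L S) * ?B S' S"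
    unfolding comm_def using Suc.prems by (simp add: finite_FC algebra_simps)
  then show ?case using Suc.IH[OF Suc.prems] by simp
qed

lemma Ik_entry:
  assumes S: "S \<in> FC d L" and S': "S' \<in> FC d L" and k: "k \<noteq> 0" and U: "U > 0"
    and conv: "B S' S \<noteq> 0 \<longrightarrow> \<bar>h\<bar> * norm (stag_magn d L S' - stag_magn d L S) < U"
  shows "Ik d L U h k B S' S = (if int (double_occ d L S') = int (double_occ d L S) + k
      then B S' S / (of_int k * of_real U - of_real h * (stag_magn d L S' - stag_magn d L S))
      else 0)"
proof -
  let ?G = "grade d L k B S' S" and ?D = "stag_magn d L S' - stag_magn d L S"
  let ?r = "of_real h / (of_int k * of_real U) * ?D"
  have series: "Ik d L U h k B S' S = 1 / (of_int k * of_real U) * (\<Sum>n. ?r ^ n * ?G)"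
    unfolding Ik_def ad_Mop_power_entry[OF S S'] by (simp only: power_mult_distrib mult.assoc)
  show ?thesis
  proof (cases "?G = 0")
    case True
    then show ?thesis unfolding series using grade_entry[OF S S', of k B] by (auto split: if_splits)
  next
    case False
    then have shift: "int (double_occ d L S') = int (double_occ d L S) + k" and "B S' S \<noteq> 0"
      using grade_entry[OF S S', of k B] by (auto split: if_splits)
    note conv[rule_format, OF this(2)]
    moreover have "U \<le> \<bar>of_int k\<bar> * U"
      using k U mult_right_mono[of 1 "\<bar>of_int k\<bar>" U] by simp
    ultimately have "\<bar>h\<bar> * norm ?D < \<bar>of_int k\<bar> * U"
      by linarith
    then have r: "norm ?r < 1"
      using U k by (simp add: norm_mult norm_divide divide_less_eq)
    then have "(\<Sum>n. ?r ^ n * ?G) = ?G / (1 - ?r)" and "1 - ?r \<noteq> 0"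
      using suminf_mult2[OF summable_geometric[OF r], of ?G] suminf_geometric[OF r] by auto
    then have "Ik d L U h k B S' S = ?G / (of_int k * of_real U - of_real h * ?D)"
      unfolding series using k U by (simp add: field_simps)
    then show ?thesis using shift grade_entry[OF S S', of k B] by simp
  qed
qed

lemma Ioff_entry:
  assumes S: "S \<in> FC d L" and S': "S' \<in> FC d L" and U: "U > 0"
    and conv: "B S' S \<noteq> 0 \<longrightarrow> \<bar>h\<bar> * norm (stag_magn d L S' - stag_magn d L S) < U"
  shows "Ioff d L U h B S' S = (if double_occ d L S' \<noteq> double_occ d L S
      then B S' S / (of_int (int (double_occ d L S') - int (double_occ d L S)) * of_real U
                     - of_real h * (stag_magn d L S' - stag_magn d L S))
      else 0)"
proof -
  let ?k = "int (double_occ d L S') - int (double_occ d L S)"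
  have "Ioff d L U h B S' S = (\<Sum>k\<in>kset d L. if ?k = k then
      B S' S / (of_int ?k * of_real U - of_real h * (stag_magn d L S' - stag_magn d L S)) else 0)"
    unfolding Ioff_def
    by (intro sum.cong refl, subst Ik_entry[OF S S']) (auto simp: kset_def U conv)
  then show ?thesis
    using double_occ_le[of d L S] double_occ_le[of d L S'] by (auto simp: kset_def)
qed

section \<open>Second-order hopping across a bond\<close>

text \<open>A hop across the bond is labelled by \<open>e = (s, dir)\<close>: an electron of spin \<open>s\<close> moves
  from \<open>y\<close> to \<open>x\<close> if \<open>dir\<close>, and from \<open>x\<close> to \<open>y\<close> otherwise.\<close>

definition hop_dst :: "site \<Rightarrow> site \<Rightarrow> bool \<times> bool \<Rightarrow> mode" where
  "hop_dst x y e = (if snd e then (x, fst e) else (y, fst e))"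

definition hop_src :: "site \<Rightarrow> site \<Rightarrow> bool \<times> bool \<Rightarrow> mode" where
  "hop_src x y e = (if snd e then (y, fst e) else (x, fst e))"

definition hop_magn_change :: "bool \<times> bool \<Rightarrow> complex" where
  "hop_magn_change e = (if snd e then 1 else -1) * (if fst e then 1 else -1)"

definition singly_occupied :: "nat \<Rightarrow> nat \<Rightarrow> fconf \<Rightarrow> bool" where
  "singly_occupied d L S \<longleftrightarrow> S \<in> FC d L \<and> (\<forall>z\<in>Lam d L. (z, True) \<in> S \<longleftrightarrow> (z, False) \<notin> S)"

lemma sum_UNIV_bool_pair:
  "(\<Sum>e\<in>UNIV. f e) = f (True, True) + f (True, False) + f (False, True) + f (False, False)"
proof -
  have "(UNIV :: (bool \<times> bool) set) = {(True, True), (True, False), (False, True), (False, False)}"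
    by auto
  then have "(\<Sum>e\<in>UNIV. f e)
      = (\<Sum>e\<in>{(True, True), (True, False), (False, True), (False, False)}. f e)"
    by (simp only:)
  then show ?thesis by (simp add: add.assoc)
qed

lemma Top_eq_sum_hops:
  "Top d L t x y S' S = - of_real t * (\<Sum>e\<in>UNIV. hop d L (hop_dst x y e) (hop_src x y e) S' S)"
  unfolding Top_def sum_UNIV_bool_pair by (simp add: UNIV_bool hop_dst_def hop_src_def ac_simps)

lemma Top_Top_entry:
  "Top d L t x y S' K * Top d L t x y K S = (\<Sum>e1\<in>UNIV. \<Sum>e2\<in>UNIV.
     of_real t ^ 2 * (hop d L (hop_dst x y e1) (hop_src x y e1) S' K
                      * hop d L (hop_dst x y e2) (hop_src x y e2) K S))"
  unfolding Top_eq_sum_hops sum_product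
  by (simp add: power2_eq_square algebra_simps sum_distrib_left)

lemma singly_occupied_double_occ: "singly_occupied d L S \<Longrightarrow> double_occ d L S = 0"
proof -
  assume "singly_occupied d L S"
  then have "{z \<in> Lam d L. (z, True) \<in> S \<and> (z, False) \<in> S} = {}"
    unfolding singly_occupied_def by auto
  then show ?thesis unfolding double_occ_def by (simp only: card.empty)
qed

lemma singly_occupied_card:
  assumes S: "singly_occupied d L S"
  shows "card S = card (Lam d L)"
proof -
  have "S = (\<lambda>z. (z, (z, True) \<in> S)) ` Lam d L"
  proof (intro set_eqI iffI)
    fix m assume "m \<in> S"
    moreover obtain z s where "m = (z, s)" by (cases m)
    ultimately show "m \<in> (\<lambda>z. (z, (z, True) \<in> S)) ` Lam d L"
      using S unfolding singly_occupied_def FC_def by (cases s) force+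
  qed (use S in \<open>auto simp: singly_occupied_def\<close>)
  moreover have "inj_on (\<lambda>z. (z, (z, True) \<in> S)) (Lam d L)" by (auto intro: inj_onI)
  ultimately show ?thesis by (metis card_image)
qed

lemma Pproj_entry:
  "S \<in> FC d L \<Longrightarrow>
   Pproj d L S' S = (if S' = S \<and> card S = card (Lam d L) \<and> double_occ d L S = 0 then 1 else 0)"
  unfolding Pproj_def using Dop_entry[of S d L S] by auto

text \<open>The two energy denominators of \<open>\<I>\<^sub>h\<close> met along \<open>S \<rightarrow> K \<rightarrow> S'\<close> with \<open>K\<close> carrying one
  double occupancy: ascending from \<open>S\<close> (\<open>k = 1\<close>) and descending to \<open>S'\<close> (\<open>k = -1\<close>).\<close>

definition pair_weight :: "real \<Rightarrow> real \<Rightarrow> bool \<times> bool \<Rightarrow> bool \<times> bool \<Rightarrow> complex" where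
  "pair_weight U h e1 e2 = 1 / (- of_real U - of_real h * hop_magn_change e1)
                           - 1 / (of_real U - of_real h * hop_magn_change e2)"

lemma Pproj_sandwich_entry:
  assumes S: "singly_occupied d L S" and S': "singly_occupied d L S'"
  shows "mmul (FC d L) (mmul (FC d L) (Pproj d L) G) (Pproj d L) S' S = G S' S"
proof -
  have FS: "S \<in> FC d L" "S' \<in> FC d L" using S S' unfolding singly_occupied_def by auto
  have half_filled: "double_occ d L S = 0" "double_occ d L S' = 0"
    "card S = card (Lam d L)" "card S' = card (Lam d L)"
    using S S' singly_occupied_double_occ singly_occupied_card by auto
  have "mmul (FC d L) (Pproj d L) G S' S = (\<Sum>K\<in>FC d L. if K = S' then G S' S else 0)"
    unfolding mmul_def by (intro sum.cong refl) (auto simp: Pproj_entry half_filled)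
  moreover have "mmul (FC d L) (mmul (FC d L) (Pproj d L) G) (Pproj d L) S' S
      = (\<Sum>K\<in>FC d L. if K = S then mmul (FC d L) (Pproj d L) G S' S else 0)"
    unfolding mmul_def[of _ _ "Pproj d L"]
    by (intro sum.cong refl) (auto simp: Pproj_entry[OF FS(1)] half_filled)
  ultimately show ?thesis using FS by (simp add: finite_FC)
qed

locale bond_sites =
  fixes d L :: nat and x y :: site
  assumes x_in_Lam: "x \<in> Lam d L" and y_in_Lam: "y \<in> Lam d L" and x_ne_y: "x \<noteq> y"
begin

abbreviation bond_hop :: "bool \<times> bool \<Rightarrow> fconf mat" where
  "bond_hop e \<equiv> hop d L (hop_dst x y e) (hop_src x y e)"

lemma hop_dst_in_modes: "hop_dst x y e \<in> modes d L"
  using x_in_Lam y_in_Lam unfolding hop_dst_def modes_def by auto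

lemma double_occ_hop:
  assumes S: "singly_occupied d L S" and nz: "bond_hop e K S \<noteq> 0"
  shows "double_occ d L K = 1"
proof -
  obtain s dir where e: "e = (s, dir)" by (cases e)
  define u where "u = (if dir then x else y)"
  define w where "w = (if dir then y else x)"
  have uw: "u \<noteq> w" "u \<in> Lam d L"
    using x_ne_y x_in_Lam y_in_Lam unfolding u_def w_def by auto
  have K: "K = insert (u, s) (S - {(w, s)})" and "(u, s) \<notin> S"
    using hop_nonzero_imp[OF nz] uw unfolding e u_def w_def hop_dst_def hop_src_def by auto
  then have "(u, \<not> s) \<in> S" using S uw unfolding singly_occupied_def by (cases s) auto
  then have "{z \<in> Lam d L. (z, True) \<in> K \<and> (z, False) \<in> K} = {u}"
    using S uw unfolding K singly_occupied_def by (cases s) auto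
  then show ?thesis unfolding double_occ_def by simp
qed

end

locale hubbard_bond = bond_sites +
  fixes t U h :: real
  assumes eta_x: "eta x = 1" and eta_y: "eta y = -1"
    and U_pos: "U > 0" and abs_h_less_U: "\<bar>h\<bar> < U"
begin

lemma stag_magn_bond_hop:
  assumes "S \<in> FC d L" and "bond_hop e S' S \<noteq> 0"
  shows "stag_magn d L S' - stag_magn d L S = hop_magn_change e"
  using stag_magn_hop[OF assms(1) hop_dst_in_modes assms(2)] eta_x eta_y
  by (cases e) (auto simp: mode_magn_def hop_dst_def hop_src_def hop_magn_change_def)

lemma Top_resolvent_converges:
  assumes S: "S \<in> FC d L"
  shows "Top d L t x y S' S \<noteq> 0 \<longrightarrow> \<bar>h\<bar> * norm (stag_magn d L S' - stag_magn d L S) < U"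
proof
  assume nz: "Top d L t x y S' S \<noteq> 0"
  have "(\<Sum>e\<in>UNIV. bond_hop e S' S) \<noteq> 0"
    using nz unfolding Top_eq_sum_hops by auto
  then obtain e where "bond_hop e S' S \<noteq> 0"
    using sum.not_neutral_contains_not_neutral by blast
  then have "norm (stag_magn d L S' - stag_magn d L S) = 1"
    using stag_magn_bond_hop[OF S] by (auto simp: hop_magn_change_def)
  then show "\<bar>h\<bar> * norm (stag_magn d L S' - stag_magn d L S) < U" using abs_h_less_U by simp
qed

lemma commutator_summand_entry:
  assumes S: "singly_occupied d L S" and S': "singly_occupied d L S'" and K: "K \<in> FC d L"
  shows "Ioff d L U h (Top d L t x y) S' K * offd d L (Top d L t x y) K S
       - offd d L (Top d L t x y) S' K * Ioff d L U h (Top d L t x y) K S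
     = (\<Sum>e1\<in>UNIV. \<Sum>e2\<in>UNIV.
          of_real t ^ 2 * pair_weight U h e1 e2 * (bond_hop e1 S' K * bond_hop e2 K S))"
proof -
  let ?T = "Top d L t x y"
  have FS: "S \<in> FC d L" "S' \<in> FC d L" using S S' unfolding singly_occupied_def by auto
  have d0: "double_occ d L S = 0" "double_occ d L S' = 0"
    using singly_occupied_double_occ S S' by auto
  note I_down = Ioff_entry[where B = ?T, OF K FS(2) U_pos Top_resolvent_converges[OF K]]
  note I_up = Ioff_entry[where B = ?T, OF FS(1) K U_pos Top_resolvent_converges[OF FS(1)]]
  show ?thesis
  proof (cases "double_occ d L K = 0")
    case True
    then have "bond_hop e2 K S = 0" for e2 using double_occ_hop[OF S] by fastforce
    then show ?thesis
      unfolding offd_entry[OF FS(1) K] offd_entry[OF K FS(2)] I_down I_up using True d0 by simp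
  next
    case False
    let ?down = "- of_nat (double_occ d L K) * of_real U
                 - of_real h * (stag_magn d L S' - stag_magn d L K) :: complex"
    let ?up = "of_nat (double_occ d L K) * of_real U
               - of_real h * (stag_magn d L K - stag_magn d L S) :: complex"
    have "Ioff d L U h ?T S' K * offd d L ?T K S - offd d L ?T S' K * Ioff d L U h ?T K S
        = (?T S' K * ?T K S) * (1 / ?down - 1 / ?up)"
      unfolding offd_entry[OF FS(1) K] offd_entry[OF K FS(2)] I_down I_up
      using False d0 by (simp add: divide_inverse algebra_simps)
    also have "\<dots> = (\<Sum>e1\<in>UNIV. \<Sum>e2\<in>UNIV.
        of_real t ^ 2 * (bond_hop e1 S' K * bond_hop e2 K S) * (1 / ?down - 1 / ?up))"
      unfolding Top_Top_entry by (simp add: sum_distrib_right)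
    also have "\<dots> = (\<Sum>e1\<in>UNIV. \<Sum>e2\<in>UNIV.
        of_real t ^ 2 * pair_weight U h e1 e2 * (bond_hop e1 S' K * bond_hop e2 K S))"
    proof (intro sum.cong refl)
      fix e1 e2
      show "of_real t ^ 2 * (bond_hop e1 S' K * bond_hop e2 K S) * (1 / ?down - 1 / ?up) =
            of_real t ^ 2 * pair_weight U h e1 e2 * (bond_hop e1 S' K * bond_hop e2 K S)"
      proof (cases "bond_hop e1 S' K = 0 \<or> bond_hop e2 K S = 0")
        case False
        then have down: "bond_hop e1 S' K \<noteq> 0" and up: "bond_hop e2 K S \<noteq> 0" by auto
        have "double_occ d L K = 1"
          and "stag_magn d L K - stag_magn d L S = hop_magn_change e2"
          and "stag_magn d L S' - stag_magn d L K = hop_magn_change e1"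
          using double_occ_hop[OF S up] stag_magn_bond_hop[OF FS(1) up]
            stag_magn_bond_hop[OF K down] by auto
        then show ?thesis unfolding pair_weight_def by simp
      qed auto
    qed
    finally show ?thesis .
  qed
qed

lemma Xop_entry:
  assumes S: "singly_occupied d L S" and S': "singly_occupied d L S'"
  shows "Xop d L t U h x y S' S = (1/2) * (\<Sum>e1\<in>UNIV. \<Sum>e2\<in>UNIV.
       of_real t ^ 2 * pair_weight U h e1 e2 * mmul (FC d L) (bond_hop e1) (bond_hop e2) S' S)"
proof -
  let ?T = "Top d L t x y"
  let ?C = "comm (FC d L) (Ioff d L U h ?T) (offd d L ?T)"
  have FS: "S \<in> FC d L" "S' \<in> FC d L" using S S' unfolding singly_occupied_def by auto
  have "Xop d L t U h x y S' S = grade d L 0 (\<lambda>S' S. (1/2) * ?C S' S) S' S"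
    unfolding Xop_def Let_def Pproj_sandwich_entry[OF S S'] ..
  also have "\<dots> = (1/2) * ?C S' S"
    using grade_entry[OF FS] singly_occupied_double_occ[OF S] singly_occupied_double_occ[OF S']
    by simp
  also have "?C S' S = (\<Sum>K\<in>FC d L. Ioff d L U h ?T S' K * offd d L ?T K S
                                       - offd d L ?T S' K * Ioff d L U h ?T K S)"
    unfolding comm_def mmul_def by (simp add: sum_subtractf)
  also have "\<dots> = (\<Sum>K\<in>FC d L. \<Sum>e1\<in>UNIV. \<Sum>e2\<in>UNIV.
      of_real t ^ 2 * pair_weight U h e1 e2 * (bond_hop e1 S' K * bond_hop e2 K S))"
    by (intro sum.cong refl commutator_summand_entry[OF S S'])
  also have "\<dots> = (\<Sum>e1\<in>UNIV. \<Sum>e2\<in>UNIV. \<Sum>K\<in>FC d L.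
      of_real t ^ 2 * pair_weight U h e1 e2 * (bond_hop e1 S' K * bond_hop e2 K S))"
    by (subst sum.swap) (intro sum.cong refl sum.swap)
  also have "\<dots> = (\<Sum>e1\<in>UNIV. \<Sum>e2\<in>UNIV.
      of_real t ^ 2 * pair_weight U h e1 e2 * mmul (FC d L) (bond_hop e1) (bond_hop e2) S' S)"
    unfolding mmul_def by (simp add: sum_distrib_left)
  finally show ?thesis .
qed

end

section \<open>The spin basis\<close>

definition spin_conf :: "nat \<Rightarrow> nat \<Rightarrow> (site \<Rightarrow> bool) \<Rightarrow> fconf" where
  "spin_conf d L \<sigma> = (\<lambda>z. (z, \<sigma> z)) ` Lam d L"

lemma spin_conf_singly_occupied: "singly_occupied d L (spin_conf d L \<sigma>)"
  unfolding singly_occupied_def spin_conf_def FC_def by auto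

lemma spin_conf_in_FC: "spin_conf d L \<sigma> \<in> FC d L"
  using spin_conf_singly_occupied unfolding singly_occupied_def by blast

lemma spin_conf_eq_iff:
  assumes "\<sigma> \<in> SC d L" and "\<tau> \<in> SC d L"
  shows "spin_conf d L \<sigma> = spin_conf d L \<tau> \<longleftrightarrow> \<sigma> = \<tau>"
proof
  assume eq: "spin_conf d L \<sigma> = spin_conf d L \<tau>"
  show "\<sigma> = \<tau>"
  proof
    fix z
    show "\<sigma> z = \<tau> z"
    proof (cases "z \<in> Lam d L")
      case True
      then have "(z, \<sigma> z) \<in> spin_conf d L \<tau>" using eq unfolding spin_conf_def by blast
      then show ?thesis unfolding spin_conf_def by auto
    next
      case False
      then show ?thesis using assms unfolding SC_def by auto
    qed
  qed
qed simp

lemma finite_SC: "finite (SC d L)"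
proof -
  have "SC d L \<subseteq> (\<lambda>A z. z \<in> A) ` Pow (Lam d L)"
  proof
    fix \<sigma> assume "\<sigma> \<in> SC d L"
    then have "\<sigma> = (\<lambda>z. z \<in> {w \<in> Lam d L. \<sigma> w})" unfolding SC_def by auto
    then show "\<sigma> \<in> (\<lambda>A z. z \<in> A) ` Pow (Lam d L)" by blast
  qed
  then show ?thesis using finite_Lam by (auto intro: finite_subset)
qed

definition agree_outside :: "site set \<Rightarrow> (site \<Rightarrow> bool) \<Rightarrow> (site \<Rightarrow> bool) \<Rightarrow> bool" where
  "agree_outside Z \<sigma>' \<sigma> \<longleftrightarrow> (\<forall>z. z \<notin> Z \<longrightarrow> \<sigma>' z = \<sigma> z)"

lemma agree_outside_SC_iff:
  "\<sigma> \<in> SC d L \<Longrightarrow> \<sigma>' \<in> SC d L \<Longrightarrow>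
   agree_outside Z \<sigma>' \<sigma> \<longleftrightarrow> (\<forall>z\<in>Lam d L - Z. \<sigma>' z = \<sigma> z)"
  unfolding agree_outside_def SC_def by auto

text \<open>Pulling the creators at \<open>x\<close> and \<open>y\<close> to the front of \<open>|\<sigma>\<rangle>\<^sub>f\<close> costs a sign \<open>pair_sign\<close>
  that does not depend on \<open>\<sigma>\<close> (see \<open>fvec_eq_pair_state\<close>).\<close>

locale bond_ordering = bond_sites +
  fixes xs :: "site list"
  assumes distinct_xs: "distinct xs" and set_xs: "set xs = Lam d L"
begin

definition others :: "site list" where
  "others = removeAll y (removeAll x xs)"

definition pair_sign :: complex where
  "pair_sign = (-1) ^ length (takeWhile (\<lambda>w. w \<noteq> x) xs)
               * (-1) ^ length (takeWhile (\<lambda>w. w \<noteq> y) (removeAll x xs))"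

definition pair_state :: "(site \<Rightarrow> bool) \<Rightarrow> mode \<Rightarrow> mode \<Rightarrow> fconf \<Rightarrow> complex" where
  "pair_state \<sigma> \<alpha> \<beta> = mat_vec (FC d L) (cre \<alpha>) (mat_vec (FC d L) (cre \<beta>) (fvec d L others \<sigma>))"

definition jw_phase :: "(site \<Rightarrow> bool) \<Rightarrow> complex" where
  "jw_phase \<sigma> = fvec d L xs \<sigma> (spin_conf d L \<sigma>)"

lemma set_others: "set others = Lam d L - {x, y}"
  unfolding others_def using set_xs by auto

lemma supported_others: "supported (FC d L) (fvec d L others \<sigma>)"
  using supported_fvec[of others d L] set_others by auto

lemma fvec_eq_pair_state: "fvec d L xs \<sigma> = (\<lambda>S. pair_sign * pair_state \<sigma> (x, \<sigma> x) (y, \<sigma> y) S)"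
proof -
  have move_x: "fvec d L xs \<sigma> = (\<lambda>S. (-1) ^ length (takeWhile (\<lambda>w. w \<noteq> x) xs) *
      mat_vec (FC d L) (cre (x, \<sigma> x)) (fvec d L (removeAll x xs) \<sigma>) S)"
    using fvec_move_to_front[OF distinct_xs] x_in_Lam set_xs by auto
  have move_y: "fvec d L (removeAll x xs) \<sigma>
      = (\<lambda>S. (-1) ^ length (takeWhile (\<lambda>w. w \<noteq> y) (removeAll x xs)) *
          mat_vec (FC d L) (cre (y, \<sigma> y)) (fvec d L others \<sigma>) S)"
    unfolding others_def using fvec_move_to_front[of "removeAll x xs" d L y \<sigma>]
      y_in_Lam x_ne_y set_xs distinct_xs by (auto simp: distinct_removeAll)
  show ?thesis
    unfolding move_x move_y mat_vec_scale pair_state_def pair_sign_def by (simp add: mult.assoc)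
qed

lemma fvec_eq_phase_indicator:
  "fvec d L xs \<sigma> = (\<lambda>S. if S = spin_conf d L \<sigma> then jw_phase \<sigma> else 0)"
  and jw_phase_cases: "jw_phase \<sigma> = 1 \<or> jw_phase \<sigma> = -1"
proof -
  obtain c where "c = 1 \<or> c = -1"
    and "fvec d L xs \<sigma> = (\<lambda>S. if S = spin_conf d L \<sigma> then c else 0)"
    using fvec_eq_signed_indicator[OF distinct_xs, of d L \<sigma>] set_xs unfolding spin_conf_def by auto
  moreover from this have "jw_phase \<sigma> = c" unfolding jw_phase_def by simp
  ultimately show "fvec d L xs \<sigma> = (\<lambda>S. if S = spin_conf d L \<sigma> then jw_phase \<sigma> else 0)"
    and "jw_phase \<sigma> = 1 \<or> jw_phase \<sigma> = -1" by auto
qed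

lemma pair_state_cong: "(\<And>z. z \<notin> {x, y} \<Longrightarrow> \<sigma> z = \<tau> z) \<Longrightarrow> pair_state \<sigma> = pair_state \<tau>"
  unfolding pair_state_def using fvec_cong[of others \<sigma> \<tau>] set_others by auto

lemma pair_state_swap:
  "\<alpha> \<in> modes d L \<Longrightarrow> \<beta> \<in> modes d L \<Longrightarrow> pair_state \<sigma> \<beta> \<alpha> = (\<lambda>S. - pair_state \<sigma> \<alpha> \<beta> S)"
  unfolding pair_state_def by (intro ext) (rule cre_cre_anticomm[OF supported_others])

lemma pair_state_same_site:
  assumes "z \<in> Lam d L"
  shows "pair_state \<sigma> (z, u) (z, w) (spin_conf d L \<sigma>') = 0"
proof -
  have "(z, w) \<in> modes d L" using assms unfolding modes_def by auto
  then show ?thesis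
    unfolding pair_state_def mat_vec_cre[OF supported_cre[OF supported_others \<open>(z, w) \<in> modes d L\<close>]]
      mat_vec_cre[OF supported_others]
    by (auto simp: spin_conf_def)
qed

lemma hop_pair_state:
  assumes a: "a \<in> modes d L" and b: "fst b \<in> {x, y}"
    and \<alpha>: "\<alpha> \<in> modes d L" and \<beta>: "\<beta> \<in> modes d L"
  shows "mat_vec (FC d L) (hop d L a b) (pair_state \<sigma> \<alpha> \<beta>) =
    (\<lambda>S. (if b = \<alpha> then pair_state \<sigma> a \<beta> S else 0) + (if b = \<beta> then pair_state \<sigma> \<alpha> a S else 0))"
proof -
  have bM: "b \<in> modes d L" using b x_in_Lam y_in_Lam unfolding modes_def by (cases b) auto
  have vacuum: "mat_vec (FC d L) (hop d L a b) (fvec d L others \<sigma>) = (\<lambda>S. 0)"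
    using hop_fvec_eq_0[OF _ a bM] b set_others by (cases b) auto
  have inner: "mat_vec (FC d L) (hop d L a b) (mat_vec (FC d L) (cre \<beta>) (fvec d L others \<sigma>)) =
     (\<lambda>S. if b = \<beta> then mat_vec (FC d L) (cre a) (fvec d L others \<sigma>) S else 0)"
    unfolding hop_cre_commutator[OF supported_others a \<beta>] vacuum mat_vec_zero by simp
  show ?thesis
    unfolding pair_state_def hop_cre_commutator[OF supported_cre[OF supported_others \<beta>] a \<alpha>]
      inner mat_vec_if by simp
qed

text \<open>\<open>overlap \<sigma>' v\<close> is \<open>pair_sign\<close> times the inner product of \<open>|\<sigma>'\<rangle>\<^sub>f\<close> with \<open>v\<close>.\<close>

definition overlap :: "(site \<Rightarrow> bool) \<Rightarrow> (fconf \<Rightarrow> complex) \<Rightarrow> complex" where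
  "overlap \<sigma>' v = cnj (jw_phase \<sigma>') * pair_sign * v (spin_conf d L \<sigma>')"

definition bond_overlap :: "(site \<Rightarrow> bool) \<Rightarrow> (site \<Rightarrow> bool) \<Rightarrow> mode \<Rightarrow> mode \<Rightarrow> complex" where
  "bond_overlap \<sigma>' \<sigma> m1 m2 =
     (if fst m1 = x \<and> fst m2 = y
      then of_bool (agree_outside {x, y} \<sigma>' \<sigma> \<and> \<sigma>' x = snd m1 \<and> \<sigma>' y = snd m2)
      else if fst m1 = y \<and> fst m2 = x
      then - of_bool (agree_outside {x, y} \<sigma>' \<sigma> \<and> \<sigma>' x = snd m2 \<and> \<sigma>' y = snd m1)
      else 0)"

lemma overlap_add: "overlap \<sigma>' (\<lambda>S. f S + g S) = overlap \<sigma>' f + overlap \<sigma>' g"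
  unfolding overlap_def by (simp add: algebra_simps)

lemma overlap_if: "overlap \<sigma>' (\<lambda>S. if P then f S else 0) = (if P then overlap \<sigma>' f else 0)"
  unfolding overlap_def by simp

lemma overlap_neg: "overlap \<sigma>' (\<lambda>S. - f S) = - overlap \<sigma>' f"
  unfolding overlap_def by simp

lemma overlap_pair_state_xy:
  assumes \<sigma>: "\<sigma> \<in> SC d L" and \<sigma>': "\<sigma>' \<in> SC d L"
  shows "overlap \<sigma>' (pair_state \<sigma> (x, u) (y, w))
       = of_bool (agree_outside {x, y} \<sigma>' \<sigma> \<and> \<sigma>' x = u \<and> \<sigma>' y = w)"
proof -
  define \<tau> where "\<tau> = \<sigma>(x := u, y := w)"
  have \<tau>: "\<tau> \<in> SC d L" using \<sigma> x_in_Lam y_in_Lam unfolding \<tau>_def SC_def by auto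
  have "pair_state \<sigma> = pair_state \<tau>" by (rule pair_state_cong) (simp add: \<tau>_def)
  moreover have "\<tau> x = u" "\<tau> y = w" unfolding \<tau>_def using x_ne_y by auto
  ultimately have "pair_sign * pair_state \<sigma> (x, u) (y, w) (spin_conf d L \<sigma>')
      = fvec d L xs \<tau> (spin_conf d L \<sigma>')"
    unfolding fvec_eq_pair_state[of \<tau>] by simp
  also have "\<dots> = (if \<sigma>' = \<tau> then jw_phase \<tau> else 0)"
    unfolding fvec_eq_phase_indicator spin_conf_eq_iff[OF \<sigma>' \<tau>] ..
  finally have val: "pair_sign * pair_state \<sigma> (x, u) (y, w) (spin_conf d L \<sigma>')
      = (if \<sigma>' = \<tau> then jw_phase \<tau> else 0)" .
  have iff: "\<sigma>' = \<tau> \<longleftrightarrow> agree_outside {x, y} \<sigma>' \<sigma> \<and> \<sigma>' x = u \<and> \<sigma>' y = w"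
  proof
    assume "\<sigma>' = \<tau>"
    then show "agree_outside {x, y} \<sigma>' \<sigma> \<and> \<sigma>' x = u \<and> \<sigma>' y = w"
      unfolding \<tau>_def agree_outside_def using x_ne_y by simp
  next
    assume agree: "agree_outside {x, y} \<sigma>' \<sigma> \<and> \<sigma>' x = u \<and> \<sigma>' y = w"
    show "\<sigma>' = \<tau>"
    proof
      fix z
      show "\<sigma>' z = \<tau> z"
        using agree unfolding \<tau>_def agree_outside_def by (cases "z = x"; cases "z = y") auto
    qed
  qed
  have "cnj (jw_phase \<sigma>') * jw_phase \<sigma>' = 1" using jw_phase_cases[of \<sigma>'] by auto
  then show ?thesis
    unfolding overlap_def iff[symmetric] using val by (cases "\<sigma>' = \<tau>") (simp_all add: mult.assoc)
qed

lemma overlap_pair_state: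
  assumes \<sigma>: "\<sigma> \<in> SC d L" and \<sigma>': "\<sigma>' \<in> SC d L"
    and m1: "fst m1 \<in> {x, y}" and m2: "fst m2 \<in> {x, y}"
  shows "overlap \<sigma>' (pair_state \<sigma> m1 m2) = bond_overlap \<sigma>' \<sigma> m1 m2"
proof -
  obtain z1 u z2 w where m: "m1 = (z1, u)" "m2 = (z2, w)" by (cases m1, cases m2)
  have same_site: "overlap \<sigma>' (pair_state \<sigma> (z, u) (z, w)) = 0" if "z \<in> Lam d L" for z u w
    unfolding overlap_def pair_state_same_site[OF that] by simp
  have modes: "(x, b) \<in> modes d L" "(y, b) \<in> modes d L" for b
    using x_in_Lam y_in_Lam unfolding modes_def by auto
  have xy: "overlap \<sigma>' (pair_state \<sigma> (x, u) (y, w))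
      = of_bool (agree_outside {x, y} \<sigma>' \<sigma> \<and> \<sigma>' x = u \<and> \<sigma>' y = w)" for u w
    by (rule overlap_pair_state_xy[OF \<sigma> \<sigma>'])
  from m1 m2 consider "z1 = x" "z2 = x" | "z1 = x" "z2 = y" | "z1 = y" "z2 = x" | "z1 = y" "z2 = y"
    unfolding m by auto
  then show ?thesis
  proof cases
    case 1
    then show ?thesis using same_site[OF x_in_Lam] x_ne_y by (simp add: m bond_overlap_def)
  next
    case 2
    then show ?thesis using x_ne_y by (simp add: m bond_overlap_def xy)
  next
    case 3
    then show ?thesis using x_ne_y
      by (simp add: m bond_overlap_def xy pair_state_swap[OF modes] overlap_neg)
  next
    case 4
    then show ?thesis using same_site[OF y_in_Lam] x_ne_y by (simp add: m bond_overlap_def)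
  qed
qed

lemma overlap_hop_hop_pair_state:
  assumes \<sigma>: "\<sigma> \<in> SC d L" and \<sigma>': "\<sigma>' \<in> SC d L"
    and a1: "fst a1 \<in> {x, y}" and b1: "fst b1 \<in> {x, y}"
    and a2: "fst a2 \<in> {x, y}" and b2: "fst b2 \<in> {x, y}"
    and \<alpha>: "fst \<alpha> \<in> {x, y}" and \<beta>: "fst \<beta> \<in> {x, y}"
  shows "overlap \<sigma>' (mat_vec (FC d L) (hop d L a1 b1)
                      (mat_vec (FC d L) (hop d L a2 b2) (pair_state \<sigma> \<alpha> \<beta>))) =
    (if b2 = \<alpha> then (if b1 = a2 then bond_overlap \<sigma>' \<sigma> a1 \<beta> else 0)
                   + (if b1 = \<beta> then bond_overlap \<sigma>' \<sigma> a2 a1 else 0) else 0) +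
    (if b2 = \<beta> then (if b1 = \<alpha> then bond_overlap \<sigma>' \<sigma> a1 a2 else 0)
                   + (if b1 = a2 then bond_overlap \<sigma>' \<sigma> \<alpha> a1 else 0) else 0)"
proof -
  have M: "fst m \<in> {x, y} \<Longrightarrow> m \<in> modes d L" for m
    using x_in_Lam y_in_Lam unfolding modes_def by (cases m) auto
  have hop: "mat_vec (FC d L) (hop d L a b) (pair_state \<sigma> \<alpha>' \<beta>') =
      (\<lambda>S. (if b = \<alpha>' then pair_state \<sigma> a \<beta>' S else 0) + (if b = \<beta>' then pair_state \<sigma> \<alpha>' a S else 0))"
    if "fst a \<in> {x, y}" "fst b \<in> {x, y}" "fst \<alpha>' \<in> {x, y}" "fst \<beta>' \<in> {x, y}" for a b \<alpha>' \<beta>'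
    using hop_pair_state[OF M \<open>fst b \<in> {x, y}\<close> M M] that by blast
  note ov = overlap_pair_state[OF \<sigma> \<sigma>']
  show ?thesis
    unfolding hop[OF a2 b2 \<alpha> \<beta>] mat_vec_add mat_vec_if hop[OF a1 b1 a2 \<beta>] hop[OF a1 b1 \<alpha> a2]
      overlap_add overlap_if ov[OF a1 \<beta>] ov[OF a2 a1] ov[OF a1 a2] ov[OF \<alpha> a1]
    by simp
qed

lemma Uconj_entry:
  assumes "\<sigma> \<in> SC d L" and "\<sigma>' \<in> SC d L"
  shows "Uconj d L xs X \<sigma>' \<sigma>
       = cnj (jw_phase \<sigma>') * X (spin_conf d L \<sigma>') (spin_conf d L \<sigma>) * jw_phase \<sigma>"
proof -
  have "Uconj d L xs X \<sigma>' \<sigma> = (\<Sum>S'\<in>FC d L. if S' = spin_conf d L \<sigma>' then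
      (\<Sum>S\<in>FC d L. if S = spin_conf d L \<sigma> then cnj (jw_phase \<sigma>') * X S' S * jw_phase \<sigma> else 0)
      else 0)"
    unfolding Uconj_def fvec_eq_phase_indicator by (intro sum.cong refl) (auto intro!: sum.cong)
  then show ?thesis by (simp add: finite_FC spin_conf_in_FC)
qed

lemma mmul_jw_phase:
  "mmul (FC d L) A B S' (spin_conf d L \<sigma>) * jw_phase \<sigma>
     = pair_sign * mat_vec (FC d L) A (mat_vec (FC d L) B (pair_state \<sigma> (x, \<sigma> x) (y, \<sigma> y))) S'"
proof -
  have "mmul (FC d L) A B S' (spin_conf d L \<sigma>) * jw_phase \<sigma>
      = mat_vec (FC d L) (mmul (FC d L) A B) (fvec d L xs \<sigma>) S'"
    unfolding mat_vec_def fvec_eq_phase_indicator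
    by (simp add: finite_FC spin_conf_in_FC if_distrib cong: if_cong)
  also have "\<dots> = pair_sign
      * mat_vec (FC d L) A (mat_vec (FC d L) B (pair_state \<sigma> (x, \<sigma> x) (y, \<sigma> y))) S'"
    unfolding mat_vec_mmul fvec_eq_pair_state mat_vec_scale ..
  finally show ?thesis .
qed

end

section \<open>The exchange matrix on the bond\<close>

definition exchange_matrix :: "real \<Rightarrow> real \<Rightarrow> real \<Rightarrow> bool \<Rightarrow> bool \<Rightarrow> bool \<Rightarrow> bool \<Rightarrow> real" where
  "exchange_matrix t U h a' b' a b =
     (if a = b then 0
      else if a' = a \<and> b' = b then - 2 * t\<^sup>2 / (U + (if a then h else - h))
      else if a' = b \<and> b' = a then t\<^sup>2 * (1 / (U + h) + 1 / (U - h))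
      else 0)"

lemma of_real_exchange_matrix:
  "complex_of_real (exchange_matrix t U h a' b' a b) =
     (if a = b then 0
      else if a' = a \<and> b' = b
      then - 2 * of_real t ^ 2
             * (if a then 1 / (of_real U + of_real h) else 1 / (of_real U - of_real h))
      else if a' = b \<and> b' = a
      then of_real t ^ 2 * (1 / (of_real U + of_real h) + 1 / (of_real U - of_real h))
      else 0)"
  unfolding exchange_matrix_def by simp

lemma Sop_entry:
  "Sop z a \<sigma>' \<sigma> = (if agree_outside {z} \<sigma>' \<sigma> then (1/2) * pauli a (\<sigma>' z) (\<sigma> z) else 0)"
  unfolding Sop_def siteop_def agree_outside_def by simp

lemma agree_outside_two_sites:
  assumes "x \<noteq> y"
  shows "agree_outside {x} \<sigma>' \<tau> \<and> agree_outside {y} \<tau> \<sigma>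
     \<longleftrightarrow> \<tau> = \<sigma>'(x := \<sigma> x) \<and> agree_outside {x, y} \<sigma>' \<sigma>"
proof
  assume h: "agree_outside {x} \<sigma>' \<tau> \<and> agree_outside {y} \<tau> \<sigma>"
  have "\<tau> = \<sigma>'(x := \<sigma> x)"
  proof
    fix w show "\<tau> w = (\<sigma>'(x := \<sigma> x)) w"
      using h assms unfolding agree_outside_def by (cases "w = x") auto
  qed
  then show "\<tau> = \<sigma>'(x := \<sigma> x) \<and> agree_outside {x, y} \<sigma>' \<sigma>"
    using h unfolding agree_outside_def by auto
next
  assume "\<tau> = \<sigma>'(x := \<sigma> x) \<and> agree_outside {x, y} \<sigma>' \<sigma>"
  then show "agree_outside {x} \<sigma>' \<tau> \<and> agree_outside {y} \<tau> \<sigma>"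
    using assms unfolding agree_outside_def by auto
qed

context bond_sites
begin

lemma mmul_Sop_Sop:
  assumes \<sigma>': "\<sigma>' \<in> SC d L"
  shows "mmul (SC d L) (Sop x a) (Sop y a) \<sigma>' \<sigma> = (if agree_outside {x, y} \<sigma>' \<sigma>
     then (1/4) * (pauli a (\<sigma>' x) (\<sigma> x) * pauli a (\<sigma>' y) (\<sigma> y)) else 0)"
proof -
  let ?\<tau> = "\<sigma>'(x := \<sigma> x)"
  have "?\<tau> \<in> SC d L" using \<sigma>' x_in_Lam unfolding SC_def by auto
  moreover have "Sop x a \<sigma>' \<tau> * Sop y a \<tau> \<sigma> = (if \<tau> = ?\<tau> then (if agree_outside {x, y} \<sigma>' \<sigma>
      then (1/4) * (pauli a (\<sigma>' x) (\<sigma> x) * pauli a (\<sigma>' y) (\<sigma> y)) else 0) else 0)" for \<tau>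
    using agree_outside_two_sites[OF x_ne_y, of \<sigma>' \<tau> \<sigma>] x_ne_y by (auto simp: Sop_entry)
  ultimately show ?thesis unfolding mmul_def by (simp add: finite_SC)
qed

lemma spin_side_entry:
  assumes hU: "\<bar>h\<bar> < U" and \<sigma>: "\<sigma> \<in> SC d L" and \<sigma>': "\<sigma>' \<in> SC d L"
  shows "- of_real (Jxy t U h) * Bspin d L x y \<sigma>' \<sigma>
         + of_real (bxy t U h) * (Sop x 3 \<sigma>' \<sigma> - Sop y 3 \<sigma>' \<sigma>)
    = (if agree_outside {x, y} \<sigma>' \<sigma>
       then of_real (exchange_matrix t U h (\<sigma>' x) (\<sigma>' y) (\<sigma> x) (\<sigma> y)) else 0)"
proof -
  define A where "A = agree_outside {x, y} \<sigma>' \<sigma>"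
  have "\<sigma>' = \<sigma> \<longleftrightarrow> A \<and> \<sigma>' x = \<sigma> x \<and> \<sigma>' y = \<sigma> y"
  proof
    assume h: "A \<and> \<sigma>' x = \<sigma> x \<and> \<sigma>' y = \<sigma> y"
    show "\<sigma>' = \<sigma>"
    proof
      fix z show "\<sigma>' z = \<sigma> z"
        using h unfolding A_def agree_outside_def by (cases "z = x"; cases "z = y") auto
    qed
  qed (simp add: A_def agree_outside_def)
  then have mid: "mid \<sigma>' \<sigma> = (if A \<and> \<sigma>' x = \<sigma> x \<and> \<sigma>' y = \<sigma> y then 1 else 0)"
    unfolding mid_def by simp
  have Sx: "agree_outside {x} \<sigma>' \<sigma> \<longleftrightarrow> A \<and> \<sigma>' y = \<sigma> y"
    and Sy: "agree_outside {y} \<sigma>' \<sigma> \<longleftrightarrow> A \<and> \<sigma>' x = \<sigma> x"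
    unfolding A_def agree_outside_def using x_ne_y by auto
  have "U + h \<noteq> 0" "U - h \<noteq> 0" using hU by auto
  then have "Jxy t U h = 2 * t\<^sup>2 * (1 / (U + h) + 1 / (U - h))"
    and "bxy t U h = t\<^sup>2 * (1 / (U - h) - 1 / (U + h))"
    unfolding Jxy_def bxy_def by (simp_all add: field_simps power2_eq_square)
  then have J: "complex_of_real (Jxy t U h)
      = 2 * of_real t ^ 2 * (1 / (of_real U + of_real h) + 1 / (of_real U - of_real h))"
    and b: "complex_of_real (bxy t U h)
      = of_real t ^ 2 * (1 / (of_real U - of_real h) - 1 / (of_real U + of_real h))"
    by simp_all
  show ?thesis
    unfolding A_def[symmetric] Bspin_def mid mmul_Sop_Sop[OF \<sigma>'] Sop_entry Sx Sy J b
      of_real_exchange_matrix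
    by (cases A; cases "\<sigma> x"; cases "\<sigma> y"; cases "\<sigma>' x"; cases "\<sigma>' y")
      (simp_all add: pauli_def algebra_simps)
qed

end

locale hubbard_bond_ordering = hubbard_bond + bond_ordering
begin

lemma Uconj_Xop_eq_overlap_sum:
  assumes \<sigma>: "\<sigma> \<in> SC d L" and \<sigma>': "\<sigma>' \<in> SC d L"
  shows "Uconj d L xs (Xop d L t U h x y) \<sigma>' \<sigma> = (1/2) * (\<Sum>e1\<in>UNIV. \<Sum>e2\<in>UNIV.
     of_real t ^ 2 * pair_weight U h e1 e2 * overlap \<sigma>' (mat_vec (FC d L) (bond_hop e1)
        (mat_vec (FC d L) (bond_hop e2) (pair_state \<sigma> (x, \<sigma> x) (y, \<sigma> y)))))"
proof -
  have "Uconj d L xs (Xop d L t U h x y) \<sigma>' \<sigma>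
      = cnj (jw_phase \<sigma>') * Xop d L t U h x y (spin_conf d L \<sigma>') (spin_conf d L \<sigma>) * jw_phase \<sigma>"
    by (rule Uconj_entry[OF \<sigma> \<sigma>'])
  also have "\<dots> = (1/2) * (\<Sum>e1\<in>UNIV. \<Sum>e2\<in>UNIV. of_real t ^ 2 * pair_weight U h e1 e2 *
      (cnj (jw_phase \<sigma>') * (mmul (FC d L) (bond_hop e1) (bond_hop e2)
        (spin_conf d L \<sigma>') (spin_conf d L \<sigma>) * jw_phase \<sigma>)))"
    unfolding Xop_entry[OF spin_conf_singly_occupied spin_conf_singly_occupied]
    by (simp add: sum_distrib_left sum_distrib_right algebra_simps)
  also have "\<dots> = (1/2) * (\<Sum>e1\<in>UNIV. \<Sum>e2\<in>UNIV.
     of_real t ^ 2 * pair_weight U h e1 e2 * overlap \<sigma>' (mat_vec (FC d L) (bond_hop e1)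
        (mat_vec (FC d L) (bond_hop e2) (pair_state \<sigma> (x, \<sigma> x) (y, \<sigma> y)))))"
    unfolding mmul_jw_phase overlap_def by (simp add: algebra_simps)
  finally show ?thesis .
qed

lemma fermion_side_entry:
  assumes \<sigma>: "\<sigma> \<in> SC d L" and \<sigma>': "\<sigma>' \<in> SC d L"
  shows "Uconj d L xs (Xop d L t U h x y) \<sigma>' \<sigma> = (if agree_outside {x, y} \<sigma>' \<sigma>
     then of_real (exchange_matrix t U h (\<sigma>' x) (\<sigma>' y) (\<sigma> x) (\<sigma> y)) else 0)"
proof -
  define A where "A = agree_outside {x, y} \<sigma>' \<sigma>"
  define P where "P = 1 / (complex_of_real U + of_real h)"
  define M where "M = 1 / (complex_of_real U - of_real h)"
  have bond: "fst (hop_dst x y e) \<in> {x, y}" "fst (hop_src x y e) \<in> {x, y}"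
    "fst (x, b) \<in> {x, y}" "fst (y, b) \<in> {x, y}" for e b
    unfolding hop_dst_def hop_src_def by auto
  have weight: "pair_weight U h e1 e2
      = (if hop_magn_change e1 = 1 then - P else - M) - (if hop_magn_change e2 = 1 then M else P)"
    for e1 e2
  proof -
    have flip: "1 / (- a - b) = - (1 / (a + b))" for a b :: complex
      using divide_minus_right[of 1 "a + b"] by simp
    show ?thesis
      unfolding pair_weight_def flip P_def M_def hop_magn_change_def
      by (cases e1; cases e2) simp_all
  qed
  show ?thesis
    unfolding Uconj_Xop_eq_overlap_sum[OF \<sigma> \<sigma>'] sum_UNIV_bool_pair
      overlap_hop_hop_pair_state[OF \<sigma> \<sigma>' bond(1,2,1,2,3,4)] bond_overlap_def A_def[symmetric]
      weight of_real_exchange_matrix P_def[symmetric] M_def[symmetric]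
    by (cases A; cases "\<sigma> x"; cases "\<sigma> y"; cases "\<sigma>' x"; cases "\<sigma>' y")
      (simp_all add: hop_dst_def hop_src_def hop_magn_change_def x_ne_y x_ne_y[symmetric]
        algebra_simps)
qed

end

theorem lemmaB2:
  fixes d L :: nat and t h h0 U :: real and x y :: site and xs :: "site list"
  assumes "even L" and "L > 0"
    and "h0 > 0" and "\<bar>h\<bar> \<le> h0" and "U > h0"
    and "nn_bond d L x y" and "eta x = 1" and "eta y = -1"
    and "distinct xs" and "set xs = Lam d L"
  shows "spin_supported d L {x, y} (Uconj d L xs (Xop d L t U h x y))
    \<and> (\<forall>\<sigma>'\<in>SC d L. \<forall>\<sigma>\<in>SC d L.
         Uconj d L xs (Xop d L t U h x y) \<sigma>' \<sigma> =
           - of_real (Jxy t U h) * Bspin d L x y \<sigma>' \<sigma>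
           + of_real (bxy t U h) * (Sop x 3 \<sigma>' \<sigma> - Sop y 3 \<sigma>' \<sigma>))
    \<and> Jxy t U 0 = 4 * t^2 / U \<and> bxy t U 0 = 0"
proof -
  have hU: "\<bar>h\<bar> < U" using assms(4,5) by linarith
  interpret hubbard_bond_ordering d L x y t U h xs
    using assms(3-10) hU by unfold_locales (auto simp: nn_bond_def)
  let ?X = "Uconj d L xs (Xop d L t U h x y)"
  let ?K = "\<lambda>\<beta>' \<beta>. complex_of_real (exchange_matrix t U h (\<beta>' x) (\<beta>' y) (\<beta> x) (\<beta> y))"
  have "spin_supported d L {x, y} ?X"
    unfolding spin_supported_def
    by (rule exI[of _ ?K]) (simp add: fermion_side_entry agree_outside_SC_iff)
  moreover have "?X \<sigma>' \<sigma> = - of_real (Jxy t U h) * Bspin d L x y \<sigma>' \<sigma>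
      + of_real (bxy t U h) * (Sop x 3 \<sigma>' \<sigma> - Sop y 3 \<sigma>' \<sigma>)"
    if "\<sigma> \<in> SC d L" and "\<sigma>' \<in> SC d L" for \<sigma> \<sigma>'
    unfolding fermion_side_entry[OF that] spin_side_entry[OF hU that] ..
  moreover have "Jxy t U 0 = 4 * t^2 / U" and "bxy t U 0 = 0"
    using hU by (simp_all add: Jxy_def bxy_def power2_eq_square)
  ultimately show ?thesis by blast
qed

end
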